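(* If $G = K_4$ or $G$ is a diamond-necklace $N_k$ for some $k \ge 2$, then $\sigma_{(2,2)}(G) = \sigma_{(2,3)}(G)$.
   Context: A diamond is a graph isomorphic to $K_4$ minus one edge. Diamond-necklace: for $k\ge 2$, take $k$ disjoint diamonds $D_1,\dots,D_k$ with $V(D_i)=\{a_i,b_i,c_i,d_i\}$ where $a_ib_i$ is the missing edge, and add the edges $a_ib_{i+1}$ for $i\in\{1,\dots,k-1\}$ and the edge $a_kb_1$; the result is $N_k$. $(p,q)$-spreading: let $p\in\mathbb{N}$ and $q\in\mathbb{N}\cup\{\infty\}$. Start with a set $S\subseteq V(G)$ of blue vertices, all other vertices white. The color change rule: if a white vertex $w$ has at least $p$ blue neighbors, and at least one of the blue neighbors of $w$ has at most $q$ white neighbors, then $w$ is recolored blue. $S$ is a $(p,q)$-spreading set if repeatedly applying this rule eventually colors all vertices blue. $\sigma_{(p,q)}(G)$ is the minimum cardinality of a $(p,q)$-spreading set of $G$. *)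

theory Defs
  imports Main "HOL-Library.Extended_Nat"
begin

text \<open>A finite simple graph is given by a vertex set V and a symmetric irreflexive
adjacency relation E (only adjacencies between vertices of V matter).\<close>

definition white_nbrs :: "'a set \<Rightarrow> ('a \<Rightarrow> 'a \<Rightarrow> bool) \<Rightarrow> 'a set \<Rightarrow> 'a \<Rightarrow> 'a set" where
  "white_nbrs V E B u = {x \<in> V. E u x \<and> x \<notin> B}"

definition blue_nbrs :: "'a set \<Rightarrow> ('a \<Rightarrow> 'a \<Rightarrow> bool) \<Rightarrow> 'a set \<Rightarrow> 'a \<Rightarrow> 'a set" where
  "blue_nbrs V E B u = {x \<in> V. E u x \<and> x \<in> B}"

text \<open>One round of the (p,q) colour change rule, applied to all eligible white vertices
simultaneously (the rule is monotone, so the final result does not depend on the order).\<close>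
definition spread_step :: "'a set \<Rightarrow> ('a \<Rightarrow> 'a \<Rightarrow> bool) \<Rightarrow> nat \<Rightarrow> enat \<Rightarrow> 'a set \<Rightarrow> 'a set" where
  "spread_step V E p q B = B \<union>
     {w \<in> V - B. p \<le> card (blue_nbrs V E B w) \<and>
        (\<exists>u \<in> blue_nbrs V E B w. enat (card (white_nbrs V E B u)) \<le> q)}"

definition spreading_set :: "'a set \<Rightarrow> ('a \<Rightarrow> 'a \<Rightarrow> bool) \<Rightarrow> nat \<Rightarrow> enat \<Rightarrow> 'a set \<Rightarrow> bool" where
  "spreading_set V E p q S \<longleftrightarrow> S \<subseteq> V \<and> (\<exists>n. (spread_step V E p q ^^ n) S = V)"

definition sigma :: "'a set \<Rightarrow> ('a \<Rightarrow> 'a \<Rightarrow> bool) \<Rightarrow> nat \<Rightarrow> enat \<Rightarrow> nat" where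
  "sigma V E p q = (LEAST m. \<exists>S. spreading_set V E p q S \<and> card S = m)"

definition K4_V :: "nat set" where "K4_V = {0..<4}"
definition K4_E :: "nat \<Rightarrow> nat \<Rightarrow> bool" where "K4_E x y \<longleftrightarrow> x \<noteq> y"

text \<open>Diamond-necklace N_k: vertex (i,j) is a_i, b_i, c_i, d_i for j = 0,1,2,3, with i < k.
Diamond edges: all pairs within block i except a_i b_i; plus a_i b_(i+1 mod k).\<close>
definition necklace_V :: "nat \<Rightarrow> (nat \<times> nat) set" where
  "necklace_V k = {0..<k} \<times> {0..<4}"

definition necklace_E :: "nat \<Rightarrow> nat \<times> nat \<Rightarrow> nat \<times> nat \<Rightarrow> bool" where
  "necklace_E k x y \<longleftrightarrow>
     (fst x = fst y \<and> snd x \<noteq> snd y \<and> {snd x, snd y} \<noteq> {0, 1}) \<or>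
     (snd x = 0 \<and> snd y = 1 \<and> fst y = (fst x + 1) mod k) \<or>
     (snd y = 0 \<and> snd x = 1 \<and> fst x = (fst y + 1) mod k)"

end

theory Submission
  imports Defs
begin

text \<open>Let every vertex have degree at most 3 and p \<ge> 2. The potential
  \<Phi>(B) = e(B, V - B) + |B| of a blue set B is at most 4|S| for the initial set S and equals |V|
  once everything is blue. A step never increases it: each new blue vertex has at least two
  blue neighbours, so it removes at least two cut edges and adds at most one; the final step
  even decreases it. Hence every spreading set satisfies |V| < 4|S|, i.e. \<sigma> \<ge> 2 for K4 and
  \<sigma> \<ge> k + 1 for N_k, whatever q is. Already for q = 2 these bounds are attained: by two
  vertices of K4, and by all c_i together with d_0 in N_k, which colour the necklace one
  diamond after the other.\<close>

definition edges_between ::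
    "'a set \<Rightarrow> ('a \<Rightarrow> 'a \<Rightarrow> bool) \<Rightarrow> 'a set \<Rightarrow> 'a set \<Rightarrow> ('a \<times> 'a) set" where
  "edges_between V E X Y = Sigma X (blue_nbrs V E Y)"

definition spread_potential :: "'a set \<Rightarrow> ('a \<Rightarrow> 'a \<Rightarrow> bool) \<Rightarrow> 'a set \<Rightarrow> nat" where
  "spread_potential V E B = card (edges_between V E B (V - B)) + card B"

lemma finite_edges_between: "finite V \<Longrightarrow> X \<subseteq> V \<Longrightarrow> finite (edges_between V E X Y)"
  by (rule finite_subset[of _ "V \<times> V"]) (auto simp: edges_between_def blue_nbrs_def)

lemma card_edges_between:
  "finite V \<Longrightarrow> X \<subseteq> V \<Longrightarrow>
    card (edges_between V E X Y) = (\<Sum>x\<in>X. card (blue_nbrs V E Y x))"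
  unfolding edges_between_def
  by (rule card_SigmaI) (auto simp: blue_nbrs_def intro: finite_subset)

lemma card_edges_between_Un_left:
  assumes "finite V" "X1 \<subseteq> V" "X2 \<subseteq> V" "X1 \<inter> X2 = {}"
  shows "card (edges_between V E (X1 \<union> X2) Y) = card (edges_between V E X1 Y) + card (edges_between V E X2 Y)"
proof -
  have "edges_between V E (X1 \<union> X2) Y = edges_between V E X1 Y \<union> edges_between V E X2 Y"
    by (auto simp: edges_between_def)
  moreover have "edges_between V E X1 Y \<inter> edges_between V E X2 Y = {}"
    using assms by (auto simp: edges_between_def)
  ultimately show ?thesis
    using assms by (simp add: card_Un_disjoint finite_edges_between)
qed

lemma card_edges_between_Un_right:
  assumes "finite V" "X \<subseteq> V" "Y1 \<inter> Y2 = {}"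
  shows "card (edges_between V E X (Y1 \<union> Y2)) = card (edges_between V E X Y1) + card (edges_between V E X Y2)"
proof -
  have "edges_between V E X (Y1 \<union> Y2) = edges_between V E X Y1 \<union> edges_between V E X Y2"
    by (auto simp: edges_between_def blue_nbrs_def)
  moreover have "edges_between V E X Y1 \<inter> edges_between V E X Y2 = {}"
    using assms by (auto simp: edges_between_def blue_nbrs_def)
  ultimately show ?thesis
    using assms by (simp add: card_Un_disjoint finite_edges_between)
qed

lemma card_edges_between_commute:
  assumes "symp E" "X \<subseteq> V" "Y \<subseteq> V"
  shows "card (edges_between V E X Y) = card (edges_between V E Y X)"
proof -
  have "edges_between V E Y X = prod.swap ` edges_between V E X Y"
    using assms by (auto simp: edges_between_def blue_nbrs_def image_iff dest: sympD)
  then show ?thesis by (simp add: card_image)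
qed

lemma card_edges_between_le:
  assumes "finite V" "X \<subseteq> V" "\<forall>x\<in>V. card {y\<in>V. E x y} \<le> d"
  shows "card (edges_between V E X Y) \<le> d * card X"
proof -
  have "card (edges_between V E X Y) = (\<Sum>x\<in>X. card (blue_nbrs V E Y x))"
    using assms by (simp add: card_edges_between)
  also have "\<dots> \<le> (\<Sum>x\<in>X. d)"
  proof (rule sum_mono)
    fix x assume "x \<in> X"
    have "card (blue_nbrs V E Y x) \<le> card {y\<in>V. E x y}"
      using \<open>finite V\<close> by (intro card_mono) (auto simp: blue_nbrs_def)
    then show "card (blue_nbrs V E Y x) \<le> d" using assms \<open>x \<in> X\<close> by force
  qed
  finally show ?thesis by (simp add: mult.commute)
qed

lemma spread_potential_le:
  assumes "finite V" "B \<subseteq> V" "\<forall>x\<in>V. card {y\<in>V. E x y} \<le> 3"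
  shows "spread_potential V E B \<le> 4 * card B"
  using card_edges_between_le[OF assms] by (simp add: spread_potential_def)

lemma spread_potential_extend:
  assumes "finite V" "B \<subseteq> B'" "B' \<subseteq> V"
  shows "spread_potential V E B + card (edges_between V E (B' - B) (V - B')) + card (B' - B)
       = spread_potential V E B' + card (edges_between V E B (B' - B))"
proof -
  have split_out: "V - B = (V - B') \<union> (B' - B)" and split_in: "B' = B \<union> (B' - B)"
    using assms by auto
  have "card (edges_between V E B (V - B))
      = card (edges_between V E B (V - B')) + card (edges_between V E B (B' - B))"
    by (subst split_out, rule card_edges_between_Un_right) (use assms in auto)
  moreover have "card (edges_between V E B' (V - B'))
      = card (edges_between V E B (V - B')) + card (edges_between V E (B' - B) (V - B'))"
    by (subst split_in, rule card_edges_between_Un_left) (use assms in auto)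
  moreover have "card B' = card B + card (B' - B)"
    using assms card_mono[of B' B] by (simp add: card_Diff_subset finite_subset)
  ultimately show ?thesis by (simp add: spread_potential_def)
qed

lemma spread_step_subset: "B \<subseteq> V \<Longrightarrow> spread_step V E p q B \<subseteq> V"
  by (auto simp: spread_step_def)

lemma subset_spread_step: "B \<subseteq> spread_step V E p q B"
  by (auto simp: spread_step_def)

lemma funpow_spread_step_subset: "S \<subseteq> V \<Longrightarrow> (spread_step V E p q ^^ n) S \<subseteq> V"
  by (induction n) (auto dest: spread_step_subset)

lemma subset_funpow_spread_step: "S \<subseteq> (spread_step V E p q ^^ n) S"
  by (induction n) (auto dest: subset_trans[OF _ subset_spread_step])

lemma spread_step_memI:
  assumes "finite V" "w \<in> V" "x \<in> V" "y \<in> V" "x \<noteq> y" "E w x" "E w y" "x \<in> B" "y \<in> B"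
    and "white_nbrs V E B x \<subseteq> {u, v}" and "enat 2 \<le> q"
  shows "w \<in> spread_step V E 2 q B"
proof (cases "w \<in> B")
  case False
  have "{x, y} \<subseteq> blue_nbrs V E B w"
    using assms by (simp add: blue_nbrs_def)
  moreover have "finite (blue_nbrs V E B w)"
    using \<open>finite V\<close> by (simp add: blue_nbrs_def)
  ultimately have "card {x, y} \<le> card (blue_nbrs V E B w)"
    by (rule card_mono[rotated])
  then have "2 \<le> card (blue_nbrs V E B w)"
    using \<open>x \<noteq> y\<close> by simp
  moreover have "card (white_nbrs V E B x) \<le> card {u, v}"
    using assms(10) by (rule card_mono[rotated]) simp
  then have "card (white_nbrs V E B x) \<le> 2"
    by (simp add: card_insert_if split: if_splits)
  then have "enat (card (white_nbrs V E B x)) \<le> q"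
    by (intro order_trans[OF _ \<open>enat 2 \<le> q\<close>]) simp
  moreover have "x \<in> blue_nbrs V E B w"
    using assms by (simp add: blue_nbrs_def)
  ultimately show ?thesis
    using False \<open>w \<in> V\<close> unfolding spread_step_def by blast
qed (simp add: spread_step_def)

lemma spread_step_new_edges:
  fixes q :: enat
  assumes "finite V" "symp E" "\<forall>x\<in>V. card {y\<in>V. E x y} \<le> 3" "2 \<le> p" "B \<subseteq> V"
  defines "W \<equiv> spread_step V E p q B - B"
  shows "2 * card W \<le> card (edges_between V E B W)"
    and "card (edges_between V E B W) + card (edges_between V E W (V - spread_step V E p q B))
         \<le> 3 * card W"
proof -
  have W: "W \<subseteq> V" "B \<inter> W = {}" "W \<inter> B = {}"
    using assms(5) by (auto simp: W_def spread_step_def)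
  have commute: "card (edges_between V E B W) = card (edges_between V E W B)"
    using assms W by (simp add: card_edges_between_commute)
  have "(\<Sum>w\<in>W. 2) \<le> (\<Sum>w\<in>W. card (blue_nbrs V E B w))"
    using \<open>2 \<le> p\<close> by (intro sum_mono) (auto simp: W_def spread_step_def)
  then show "2 * card W \<le> card (edges_between V E B W)"
    using assms W commute by (simp add: card_edges_between)
  have "card (edges_between V E W B) + card (edges_between V E W (V - spread_step V E p q B))
      = card (edges_between V E W (B \<union> (V - spread_step V E p q B)))"
    using assms W subset_spread_step[of B V E p q] by (subst card_edges_between_Un_right) auto
  also have "\<dots> \<le> 3 * card W"
    using assms W by (intro card_edges_between_le) auto
  finally show "card (edges_between V E B W) + card (edges_between V E W (V - spread_step V E p q B))
         \<le> 3 * card W"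
    using commute by simp
qed

lemma spread_potential_spread_step_le:
  assumes "finite V" "symp E" "\<forall>x\<in>V. card {y\<in>V. E x y} \<le> 3" "2 \<le> p" "B \<subseteq> V"
  shows "spread_potential V E (spread_step V E p q B) \<le> spread_potential V E B"
  using spread_potential_extend[OF assms(1) subset_spread_step[of B V E p q] spread_step_subset[OF assms(5)],
      where E = E]
    spread_step_new_edges[OF assms, where q = q]
  by linarith

lemma card_lt_spread_potential_if_spread_step_eq:
  assumes "finite V" "symp E" "\<forall>x\<in>V. card {y\<in>V. E x y} \<le> 3" "2 \<le> p" "B \<subseteq> V"
    and "B \<noteq> V" "spread_step V E p q B = V"
  shows "card V < spread_potential V E B"
proof -
  have "spread_potential V E B + card (V - B) = card V + card (edges_between V E B (V - B))"
    using spread_potential_extend[OF assms(1,5) subset_refl, where E = E]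
      card_Diff_subset[of B V] card_mono[of V B] assms(1,5)
    by (simp add: spread_potential_def edges_between_def blue_nbrs_def finite_subset)
  moreover have "2 * card (V - B) \<le> card (edges_between V E B (V - B))"
    using spread_step_new_edges(1)[OF assms(1-5), where q = q] assms(7) by simp
  moreover have "card (V - B) > 0"
    using assms by (simp add: card_gt_0_iff subset_antisym)
  ultimately show ?thesis by linarith
qed

lemma card_lt_spread_potential_if_spreads:
  assumes "finite V" "symp E" "\<forall>x\<in>V. card {y\<in>V. E x y} \<le> 3" "2 \<le> p"
  shows "B \<subseteq> V \<Longrightarrow> B \<noteq> V \<Longrightarrow> (spread_step V E p q ^^ n) B = V \<Longrightarrow>
    card V < spread_potential V E B"
proof (induction n arbitrary: B)
  case (Suc n)
  show ?case
  proof (cases "spread_step V E p q B = V")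
    case True
    then show ?thesis
      using card_lt_spread_potential_if_spread_step_eq assms Suc.prems by blast
  next
    case False
    then have "card V < spread_potential V E (spread_step V E p q B)"
      using Suc spread_step_subset by (metis comp_apply funpow_Suc_right)
    then show ?thesis
      using spread_potential_spread_step_le[OF assms \<open>B \<subseteq> V\<close>, where q = q] by linarith
  qed
qed simp

lemma card_lt_four_mul_card_if_spreading_set:
  assumes "finite V" "symp E" "\<forall>x\<in>V. card {y\<in>V. E x y} \<le> 3" "2 \<le> p" "V \<noteq> {}"
    and "spreading_set V E p q S"
  shows "card V < 4 * card S"
proof (cases "S = V")
  case True
  then show ?thesis using assms by (simp add: card_gt_0_iff)
next
  case False
  obtain n where "S \<subseteq> V" "(spread_step V E p q ^^ n) S = V"
    using assms by (auto simp: spreading_set_def)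
  then show ?thesis
    using card_lt_spread_potential_if_spreads[OF assms(1-4) _ False] spread_potential_le[OF assms(1) _ assms(3)]
    by (meson order_less_le_trans)
qed

lemma sigma_eqI:
  assumes "spreading_set V E p q S" "card S = m" "\<And>S. spreading_set V E p q S \<Longrightarrow> m \<le> card S"
  shows "sigma V E p q = m"
  unfolding sigma_def by (rule Least_equality) (use assms in auto)

lemma sigma_K4:
  assumes "enat 2 \<le> q"
  shows "sigma K4_V K4_E 2 q = 2"
proof (rule sigma_eqI)
  have K4_V_eq: "K4_V = {0, 1, 2, 3}"
    by (auto simp: K4_V_def)
  have white: "white_nbrs K4_V K4_E {0, 1} 0 \<subseteq> {2, 3}"
    by (auto simp: white_nbrs_def K4_V_def K4_E_def)
  have "w \<in> spread_step K4_V K4_E 2 q {0, 1}" if "w \<in> {2, 3}" for w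
    using that by (intro spread_step_memI[OF _ _ _ _ _ _ _ _ _ white assms, where y = 1])
      (auto simp: K4_V_def K4_E_def)
  then have "spread_step K4_V K4_E 2 q {0, 1} = K4_V"
    using subset_spread_step[of "{0, 1}" K4_V K4_E 2 q] spread_step_subset[of "{0, 1}" K4_V K4_E 2 q]
    unfolding K4_V_eq by blast
  then show "spreading_set K4_V K4_E 2 q {0, 1}"
    unfolding spreading_set_def by (intro conjI exI[of _ 1]) (simp_all add: K4_V_eq)
  show "card {0::nat, 1} = 2"
    by simp
  have "{y\<in>K4_V. K4_E x y} = K4_V - {x}" for x
    by (auto simp: K4_E_def)
  then have "\<forall>x\<in>K4_V. card {y\<in>K4_V. K4_E x y} \<le> 3"
    by (simp add: K4_V_def)
  moreover have "symp K4_E"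
    by (auto simp: K4_E_def intro: sympI)
  ultimately show "2 \<le> card S" if "spreading_set K4_V K4_E 2 q S" for S
    using card_lt_four_mul_card_if_spreading_set[OF _ _ _ _ _ that] by (simp add: K4_V_def)
qed

lemma mem_necklace_V [simp]: "(i, j) \<in> necklace_V k \<longleftrightarrow> i < k \<and> j < 4"
  by (simp add: necklace_V_def)

lemma necklace_E_iff:
  "necklace_E k (i, a) (j, b) \<longleftrightarrow>
     (i = j \<and> a \<noteq> b \<and> \<not> (a = 0 \<and> b = 1) \<and> \<not> (a = 1 \<and> b = 0)) \<or>
     (a = 0 \<and> b = 1 \<and> j = (i + 1) mod k) \<or> (b = 0 \<and> a = 1 \<and> i = (j + 1) mod k)"
  by (auto simp: necklace_E_def doubleton_eq_iff)

lemma necklace_nbrs_a: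
  "i < k \<Longrightarrow> z \<in> necklace_V k \<Longrightarrow> necklace_E k (i, 0) z \<Longrightarrow>
    z \<in> {(i, 2), (i, 3), ((i + 1) mod k, 1)}"
  by (cases z) (auto simp: necklace_E_iff)

lemma necklace_nbrs_b:
  assumes "i < k" "z \<in> necklace_V k" "necklace_E k (i, 1) z"
  shows "z \<in> {(i, 2), (i, 3), ((i + k - 1) mod k, 0)}"
proof -
  obtain j t where z: "z = (j, t)" by (cases z)
  have "j = (i + k - 1) mod k" if "i = (j + 1) mod k"
  proof (cases "j + 1 < k")
    case False
    then have "j + 1 = k"
      using assms z by simp
    then show ?thesis
      using that by simp
  qed (use that in simp)
  then show ?thesis
    using assms z by (auto simp: necklace_E_iff)
qed

lemma necklace_nbrs_c:
  "z \<in> necklace_V k \<Longrightarrow> necklace_E k (i, 2) z \<Longrightarrow> z \<in> {(i, 0), (i, 1), (i, 3)}"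
  by (cases z) (auto simp: necklace_E_iff)

lemma necklace_nbrs_d:
  "z \<in> necklace_V k \<Longrightarrow> necklace_E k (i, 3) z \<Longrightarrow> z \<in> {(i, 0), (i, 1), (i, 2)}"
  by (cases z) (auto simp: necklace_E_iff)

lemma necklace_degree_le_3: "\<forall>x\<in>necklace_V k. card {y\<in>necklace_V k. necklace_E k x y} \<le> 3"
proof
  fix x assume "x \<in> necklace_V k"
  then obtain i j where x: "x = (i, j)" "i < k" "j < 4"
    by (cases x) auto
  obtain a b c where "{y\<in>necklace_V k. necklace_E k x y} \<subseteq> {a, b, c}"
  proof -
    have "j = 0 \<or> j = 1 \<or> j = 2 \<or> j = 3"
      using x by auto
    then show thesis
    proof (elim disjE)
      assume "j = 0"
      then show thesis
        using x necklace_nbrs_a[of i k] by (intro that[of "(i, 2)" "(i, 3)" "((i + 1) mod k, 1)"]) auto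
    next
      assume "j = 1"
      then show thesis
        using x necklace_nbrs_b[of i k] by (intro that[of "(i, 2)" "(i, 3)" "((i + k - 1) mod k, 0)"]) auto
    next
      assume "j = 2"
      then show thesis
        using x necklace_nbrs_c[of _ k i] by (intro that[of "(i, 0)" "(i, 1)" "(i, 3)"]) auto
    next
      assume "j = 3"
      then show thesis
        using x necklace_nbrs_d[of _ k i] by (intro that[of "(i, 0)" "(i, 1)" "(i, 2)"]) auto
    qed
  qed
  then have "card {y\<in>necklace_V k. necklace_E k x y} \<le> card {a, b, c}"
    by (rule card_mono[rotated]) simp
  also have "\<dots> \<le> 3"
    by (simp add: card_insert_if)
  finally show "card {y\<in>necklace_V k. necklace_E k x y} \<le> 3" .
qed

lemma symp_necklace_E: "symp (necklace_E k)"
  unfolding symp_def necklace_E_def by (auto simp: insert_commute)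

lemma finite_necklace_V [simp]: "finite (necklace_V k)"
  by (simp add: necklace_V_def)

lemma card_necklace_V: "card (necklace_V k) = 4 * k"
  by (simp add: necklace_V_def card_cartesian_product)

definition necklace_seed :: "nat \<Rightarrow> (nat \<times> nat) set" where
  "necklace_seed k = insert (0, 3) ({0..<k} \<times> {2})"

lemma card_necklace_seed: "card (necklace_seed k) = k + 1"
  by (simp add: necklace_seed_def card_cartesian_product)

lemma necklace_first_diamond:
  assumes "0 < k" "enat 2 \<le> q"
  shows "{0} \<times> {0..<4} \<subseteq> spread_step (necklace_V k) (necklace_E k) 2 q (necklace_seed k)"
proof -
  have white: "white_nbrs (necklace_V k) (necklace_E k) (necklace_seed k) (0, 2) \<subseteq> {(0, 0), (0, 1)}"
    using assms by (auto simp: white_nbrs_def necklace_seed_def dest: necklace_nbrs_c)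
  have "w \<in> spread_step (necklace_V k) (necklace_E k) 2 q (necklace_seed k)" if "w \<in> {(0, 0), (0, 1)}" for w
    using that assms
    by (intro spread_step_memI[OF _ _ _ _ _ _ _ _ _ white assms(2), where y = "(0, 3)"])
       (auto simp: necklace_V_def necklace_E_iff necklace_seed_def)
  moreover have "(0, 2) \<in> necklace_seed k" "(0, 3) \<in> necklace_seed k"
    using assms by (auto simp: necklace_seed_def)
  ultimately show ?thesis
    using subset_spread_step[of "necklace_seed k" "necklace_V k" "necklace_E k" 2 q]
    by (auto simp: less_Suc_eq numeral_eq_Suc)
qed

text \<open>First b_(i+1) is forced by a_i, whose only white neighbour it is; then d_(i+1) and
  a_(i+1) are forced in turn by c_(i+1).\<close>
lemma necklace_next_diamond:
  assumes "Suc i < k" "enat 2 \<le> q" "{0..i} \<times> {0..<4} \<subseteq> B" "(Suc i, 2) \<in> B"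
  shows "{0..Suc i} \<times> {0..<4} \<subseteq> (spread_step (necklace_V k) (necklace_E k) 2 q ^^ 3) B"
proof -
  let ?step = "spread_step (necklace_V k) (necklace_E k) 2 q"
  define B1 where "B1 = ?step B"
  define B2 where "B2 = ?step B1"
  define B3 where "B3 = ?step B2"
  have incr: "B \<subseteq> B1" "B1 \<subseteq> B2" "B2 \<subseteq> B3"
    unfolding B1_def B2_def B3_def by (rule subset_spread_step)+
  have "white_nbrs (necklace_V k) (necklace_E k) B (i, 0) \<subseteq> {(Suc i, 1), (Suc i, 1)}"
    using assms necklace_nbrs_a[of i k] by (fastforce simp: white_nbrs_def)
  then have b: "(Suc i, 1) \<in> B1"
    unfolding B1_def using assms
    by (intro spread_step_memI[where x = "(i, 0)" and y = "(Suc i, 2)"]) (auto simp: necklace_E_iff)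
  have white_c: "white_nbrs (necklace_V k) (necklace_E k) B' (Suc i, 2) \<subseteq> {(Suc i, 0), (Suc i, 3)}"
    if "(Suc i, 1) \<in> B'" for B'
    using that by (auto simp: white_nbrs_def dest: necklace_nbrs_c)
  have d: "(Suc i, 3) \<in> B2"
    unfolding B2_def using assms b incr
    by (intro spread_step_memI[OF _ _ _ _ _ _ _ _ _ white_c[OF b] assms(2), where y = "(Suc i, 1)"])
       (auto simp: necklace_E_iff)
  have a: "(Suc i, 0) \<in> B3"
    unfolding B3_def using assms b d incr
    by (intro spread_step_memI[OF _ _ _ _ _ _ _ _ _ white_c, where y = "(Suc i, 3)"])
       (auto simp: necklace_E_iff)
  have "{0..Suc i} \<times> {0..<4} \<subseteq> B3"
  proof
    fix z assume "z \<in> {0..Suc i} \<times> {0..<4::nat}"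
    then obtain j t where z: "z = (j, t)" "j \<le> Suc i" "t < 4"
      by auto
    show "z \<in> B3"
    proof (cases "j \<le> i")
      case True
      then have "z \<in> B"
        using z assms(3) by auto
      then show ?thesis
        using incr by blast
    next
      case False
      then have "j = Suc i" "t = 0 \<or> t = 1 \<or> t = 2 \<or> t = 3"
        using z by presburger+
      then show ?thesis
        using z a b d assms(4) incr by auto
    qed
  qed
  moreover have "B3 = (?step ^^ 3) B"
    by (simp add: B1_def B2_def B3_def numeral_3_eq_3)
  ultimately show ?thesis by simp
qed

lemma necklace_diamonds_blue:
  assumes "0 < k" "enat 2 \<le> q"
  shows "i < k \<Longrightarrow>
    {0..i} \<times> {0..<4} \<subseteq> (spread_step (necklace_V k) (necklace_E k) 2 q ^^ (3 * i + 1)) (necklace_seed k)"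
proof (induction i)
  case 0
  then show ?case
    using necklace_first_diamond[OF assms] by simp
next
  case (Suc i)
  let ?step = "spread_step (necklace_V k) (necklace_E k) 2 q"
  have "(Suc i, 2) \<in> necklace_seed k"
    using Suc.prems by (simp add: necklace_seed_def)
  then have "(Suc i, 2) \<in> (?step ^^ (3 * i + 1)) (necklace_seed k)"
    by (rule subsetD[OF subset_funpow_spread_step])
  moreover have "{0..i} \<times> {0..<4} \<subseteq> (?step ^^ (3 * i + 1)) (necklace_seed k)"
    using Suc by simp
  ultimately have "{0..Suc i} \<times> {0..<4} \<subseteq> (?step ^^ 3) ((?step ^^ (3 * i + 1)) (necklace_seed k))"
    using Suc.prems assms(2) by (intro necklace_next_diamond)
  moreover have "3 * Suc i + 1 = 3 + (3 * i + 1)"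
    by simp
  ultimately show ?case
    by (simp only: funpow_add comp_apply)
qed

lemma spreading_set_necklace_seed:
  assumes "0 < k" "enat 2 \<le> q"
  shows "spreading_set (necklace_V k) (necklace_E k) 2 q (necklace_seed k)"
proof -
  let ?step = "spread_step (necklace_V k) (necklace_E k) 2 q"
  have seed: "necklace_seed k \<subseteq> necklace_V k"
    using assms by (auto simp: necklace_seed_def)
  have "necklace_V k = {0..k - 1} \<times> {0..<4}"
    using assms by (auto simp: necklace_V_def)
  also have "\<dots> \<subseteq> (?step ^^ (3 * (k - 1) + 1)) (necklace_seed k)"
    using necklace_diamonds_blue[OF assms] assms by simp
  finally show ?thesis
    unfolding spreading_set_def using seed funpow_spread_step_subset[OF seed] by blast
qed

lemma sigma_necklace:
  assumes "0 < k" "enat 2 \<le> q"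
  shows "sigma (necklace_V k) (necklace_E k) 2 q = k + 1"
proof (rule sigma_eqI)
  show "spreading_set (necklace_V k) (necklace_E k) 2 q (necklace_seed k)"
    using assms by (rule spreading_set_necklace_seed)
  show "card (necklace_seed k) = k + 1"
    by (rule card_necklace_seed)
  show "k + 1 \<le> card S" if "spreading_set (necklace_V k) (necklace_E k) 2 q S" for S
    using card_lt_four_mul_card_if_spreading_set[OF _ symp_necklace_E necklace_degree_le_3 _ _ that] assms
    by (auto simp: card_necklace_V necklace_V_def)
qed

theorem proposition4p6:
  shows "sigma K4_V K4_E 2 (enat 2) = sigma K4_V K4_E 2 (enat 3) \<and>
    (\<forall>k::nat. k \<ge> 2 \<longrightarrow>
       sigma (necklace_V k) (necklace_E k) 2 (enat 2) = sigma (necklace_V k) (necklace_E k) 2 (enat 3))"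
  using sigma_K4[of "enat 2"] sigma_K4[of "enat 3"] sigma_necklace[of _ "enat 2"] sigma_necklace[of _ "enat 3"]
  by simp

end
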